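(* Let $H$ be a $d\times d$ Hermitian matrix with exactly $K$ distinct eigenvalues $\lambda_1,\dots,\lambda_K$, and let $\mathcal{L}=i\,\mathrm{ad}_H$, i.e. $\mathcal{L}(\rho)=i[H,\rho]$. Then there exist a Hermitian-preserving trace-preserving (HPTP) linear map $\mathcal{P}$ from operators on $\mathbb{C}^d\otimes\mathbb{C}^K$ to operators on $\mathbb{C}^d$ and a family of program states $(\pi_t)_{t\ge0}$ on $\mathbb{C}^K$ such that $\mathcal{P}(\rho\otimes\pi_t)=e^{t\mathcal{L}}(\rho)$ for all $t\ge0$ and all $\rho$; that is, $\mathcal{L}$ can be exactly programmed by a quasi-sampling protocol with program states of dimension $K$.
   Context: $\mathrm{ad}_H=[H,\cdot]$. A quasi-sampling (quasi-quantum) programming protocol is a pair consisting of an HPTP retrieval map $\mathcal{P}$ and program states $\pi_t$ with $\mathcal{P}(\cdot\otimes\pi_t)=e^{t\mathcal{L}}$; HPTP maps are implemented in expectation by quasi-probability sampling of CPTP maps. *)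

theory Defs
  imports "HOL-Analysis.Analysis"
begin

text \<open>Operators (matrices) on C^n are represented as complex^'n^'n with a finite index type 'n.
  The tensor product C^d (x) C^K is indexed by the product type 'd \<times> 'k.\<close>

definition cmat_scale :: "complex \<Rightarrow> complex^'n^'m \<Rightarrow> complex^'n^'m" where
  "cmat_scale c A = (\<chi> i j. c * A$i$j)"

definition hermitian_mat :: "complex^'n^'n \<Rightarrow> bool" where
  "hermitian_mat A \<longleftrightarrow> (\<forall>i j. A$i$j = cnj (A$j$i))"

definition mat_eigenvalues :: "complex^'n^'n \<Rightarrow> complex set" where
  "mat_eigenvalues A = {l. \<exists>v. v \<noteq> 0 \<and> A *v v = l *s v}"

definition commutator :: "complex^'n^'n \<Rightarrow> complex^'n^'n \<Rightarrow> complex^'n^'n" where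
  "commutator A B = A ** B - B ** A"

definition i_ad :: "complex^'n^'n \<Rightarrow> complex^'n^'n \<Rightarrow> complex^'n^'n" where
  "i_ad H rho = cmat_scale \<i> (commutator H rho)"

definition super_exp :: "real \<Rightarrow> ('a \<Rightarrow> 'a) \<Rightarrow> 'a \<Rightarrow> 'a::real_normed_vector" where
  "super_exp t L rho = (\<Sum>n. (t ^ n / fact n) *\<^sub>R (L ^^ n) rho)"

definition tensor_mat :: "complex^'n^'n \<Rightarrow> complex^'k^'k \<Rightarrow> complex^('n \<times> 'k)^('n \<times> 'k)" where
  "tensor_mat A B = (\<chi> p q. A$fst p$fst q * B$snd p$snd q)"

definition complex_linear_map :: "(complex^'n^'n \<Rightarrow> complex^'m^'m) \<Rightarrow> bool" where
  "complex_linear_map P \<longleftrightarrow>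
     (\<forall>A B. P (A + B) = P A + P B) \<and> (\<forall>c A. P (cmat_scale c A) = cmat_scale c (P A))"

definition HPTP :: "(complex^'n^'n \<Rightarrow> complex^'m^'m) \<Rightarrow> bool" where
  "HPTP P \<longleftrightarrow> complex_linear_map P
     \<and> (\<forall>A. hermitian_mat A \<longrightarrow> hermitian_mat (P A))
     \<and> (\<forall>A. trace (P A) = trace A)"

definition psd_mat :: "complex^'n^'n \<Rightarrow> bool" where
  "psd_mat A \<longleftrightarrow> (\<forall>v::complex^'n.
     (let q = (\<Sum>i\<in>UNIV. \<Sum>j\<in>UNIV. cnj (v$i) * A$i$j * v$j) in Im q = 0 \<and> Re q \<ge> 0))"

definition density_mat :: "complex^'n^'n \<Rightarrow> bool" where
  "density_mat A \<longleftrightarrow> psd_mat A \<and> trace A = 1"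

end

theory Submission
  imports Defs "HOL-Computational_Algebra.Fundamental_Theorem_Algebra"
begin

(*
  For Hermitian H, (H - \<mu>)^2 v = 0 implies (H - \<mu>) v = 0.  Factoring an arbitrary annihilating
  polynomial of H into linear factors and absorbing them one at a time therefore shows that the
  product of the factors H - \<lambda> over the distinct eigenvalues \<lambda> annihilates H.  The Lagrange
  basis polynomials of the eigenvalues, evaluated at H, are then Hermitian spectral projectors
  P_\<lambda> with H P_\<lambda> = \<lambda> P_\<lambda>, P_\<lambda> P_\<mu> = \<delta>_\<lambda>\<mu> P_\<mu> and \<Sum> P_\<lambda> = 1.  Each P_\<lambda> \<rho> P_\<mu> is an
  eigenvector of L with eigenvalue i(\<lambda> - \<mu>), so e^{tL} \<rho> = \<Sum> e^{it(\<lambda> - \<mu>)} P_\<lambda> \<rho> P_\<mu>.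

  Enumerating the eigenvalues as \<lambda>_1, ..., \<lambda>_K, the program state is the pure state
  |\<psi>_t\<rangle>\<langle>\<psi>_t| with \<psi>_t = K^(-1/2) \<Sum>_j e^{it\<lambda>_j} |j\<rangle>, whose (j,k) entry is e^{it(\<lambda>_j - \<lambda>_k)}/K.
  The retrieval map sends each block X_jk of its input to K P_j X_jk P_k and sums; this is
  Hermitian-preserving, and adding the multiple of the identity that restores the trace makes it
  trace-preserving without changing it on the inputs \<rho> \<otimes> \<pi>_t, whose trace it already preserves.
*)

section \<open>Adjoints, complex scaling and Hermitian matrices\<close>

definition mat_adjoint :: "complex^'n^'m \<Rightarrow> complex^'m^'n" where
  "mat_adjoint A = (\<chi> i j. cnj (A$j$i))"

lemma hermitian_mat_iff_adjoint: "hermitian_mat A \<longleftrightarrow> mat_adjoint A = A"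
  unfolding hermitian_mat_def mat_adjoint_def vec_eq_iff by (auto simp: eq_commute)

lemma mat_adjoint_adjoint [simp]: "mat_adjoint (mat_adjoint A) = A"
  by (simp add: mat_adjoint_def vec_eq_iff)

lemma mat_adjoint_mult: "mat_adjoint (A ** B) = mat_adjoint B ** mat_adjoint A"
  unfolding mat_adjoint_def matrix_matrix_mult_def vec_eq_iff by (simp add: mult.commute)

lemma mat_adjoint_add: "mat_adjoint (A + B) = mat_adjoint A + mat_adjoint B"
  by (simp add: mat_adjoint_def vec_eq_iff)

lemma mat_adjoint_diff: "mat_adjoint (A - B) = mat_adjoint A - mat_adjoint B"
  by (simp add: mat_adjoint_def vec_eq_iff)

lemma mat_adjoint_sum: "mat_adjoint (sum f S) = (\<Sum>x\<in>S. mat_adjoint (f x))"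
  by (simp add: mat_adjoint_def vec_eq_iff)

lemma mat_adjoint_cmat_scale: "mat_adjoint (cmat_scale c A) = cmat_scale (cnj c) (mat_adjoint A)"
  by (simp add: mat_adjoint_def cmat_scale_def vec_eq_iff)

lemma mat_adjoint_mat [simp]: "mat_adjoint (mat c) = mat (cnj c)"
  by (simp add: mat_adjoint_def mat_def vec_eq_iff)

lemma trace_mat_adjoint: "trace (mat_adjoint A) = cnj (trace A)"
  by (simp add: trace_def mat_adjoint_def)

lemma matrix_add_rdistrib: "(A + B) ** C = A ** C + B ** (C :: 'a::semiring_1^'p^'n)"
  by (simp add: matrix_matrix_mult_def vec_eq_iff sum.distrib distrib_right)

lemma matrix_diff_rdistrib: "(A - B) ** C = A ** C - B ** (C :: 'a::ring_1^'p^'n)"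
  by (simp add: matrix_matrix_mult_def vec_eq_iff sum_subtractf left_diff_distrib)

lemma matrix_sum_ldistrib: "A ** sum f S = (\<Sum>x\<in>S. A ** (f x :: 'a::semiring_1^'p^'n))"
  by (induction S rule: infinite_finite_induct) (simp_all add: matrix_add_ldistrib)

lemma matrix_sum_rdistrib: "sum f S ** A = (\<Sum>x\<in>S. f x ** (A :: 'a::semiring_1^'p^'n))"
  by (induction S rule: infinite_finite_induct) (simp_all add: matrix_add_rdistrib)

lemma mat_add: "mat (a + b) = mat a + (mat b :: 'a::semiring_1^'n^'n)"
  by (simp add: mat_def vec_eq_iff)

lemma mat_uminus: "mat (- a) = - (mat a :: 'a::ring_1^'n^'n)"
  by (simp add: mat_def vec_eq_iff)

lemma mat_matrix_vector_mult: "mat c *v v = c *s (v :: 'a::comm_semiring_1^'n)"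
  by (simp add: mat_def matrix_vector_mult_def vec_eq_iff if_distrib if_distribR mult.commute
      cong: if_cong)

lemma mat_mult_left_eq_cmat_scale: "mat c ** A = cmat_scale c A"
  by (simp add: cmat_scale_def mat_def matrix_matrix_mult_def vec_eq_iff if_distrib if_distribR
      cong: if_cong)

lemma cmat_scale_mult_left [simp]: "cmat_scale c A ** B = cmat_scale c (A ** B)"
  by (simp add: cmat_scale_def matrix_matrix_mult_def vec_eq_iff sum_distrib_left mult_ac)

lemma cmat_scale_mult_right [simp]: "A ** cmat_scale c B = cmat_scale c (A ** B)"
  by (simp add: cmat_scale_def matrix_matrix_mult_def vec_eq_iff sum_distrib_left mult_ac)

lemma cmat_scale_cmat_scale [simp]: "cmat_scale a (cmat_scale b A) = cmat_scale (a * b) A"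
  by (simp add: cmat_scale_def vec_eq_iff)

lemma cmat_scale_one [simp]: "cmat_scale 1 A = A"
  by (simp add: cmat_scale_def vec_eq_iff)

lemma cmat_scale_zero [simp]: "cmat_scale 0 A = 0" "cmat_scale c 0 = 0"
  by (simp_all add: cmat_scale_def vec_eq_iff)

lemma cmat_scale_eq_0_iff: "cmat_scale c A = 0 \<longleftrightarrow> c = 0 \<or> A = 0"
  by (auto simp: cmat_scale_def vec_eq_iff)

lemma cmat_scale_add_right: "cmat_scale c (A + B) = cmat_scale c A + cmat_scale c B"
  by (simp add: cmat_scale_def vec_eq_iff distrib_left)

lemma cmat_scale_diff_right: "cmat_scale c (A - B) = cmat_scale c A - cmat_scale c B"
  by (simp add: cmat_scale_def vec_eq_iff right_diff_distrib)

lemma cmat_scale_add_left: "cmat_scale (a + b) A = cmat_scale a A + cmat_scale b A"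
  by (simp add: cmat_scale_def vec_eq_iff distrib_right)

lemma cmat_scale_diff_left: "cmat_scale (a - b) A = cmat_scale a A - cmat_scale b A"
  by (simp add: cmat_scale_def vec_eq_iff left_diff_distrib)

lemma cmat_scale_sum_right: "cmat_scale c (sum f S) = (\<Sum>x\<in>S. cmat_scale c (f x))"
  by (induction S rule: infinite_finite_induct) (simp_all add: cmat_scale_add_right)

lemma cmat_scale_mat: "cmat_scale a (mat b) = mat (a * b)"
  by (simp add: cmat_scale_def mat_def vec_eq_iff)

lemma scaleR_eq_cmat_scale: "r *\<^sub>R A = cmat_scale (of_real r) A"
  by (simp add: cmat_scale_def vec_eq_iff) (simp add: scaleR_conv_of_real)

lemma trace_cmat_scale: "trace (cmat_scale c A) = c * trace A"
  by (simp add: trace_def cmat_scale_def sum_distrib_left)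

lemma trace_sum: "trace (sum f S) = (\<Sum>x\<in>S. trace (f x :: 'a::comm_semiring_1^'n^'n))"
  by (induction S rule: infinite_finite_induct) (simp_all add: trace_add trace_0[simplified])

lemma complex_linear_map_sum:
  assumes "complex_linear_map L"
  shows "L (sum f S) = (\<Sum>x\<in>S. L (f x))"
proof -
  have "L 0 = 0"
    using assms unfolding complex_linear_map_def by (metis cmat_scale_zero)
  then show ?thesis
    using assms by (induction S rule: infinite_finite_induct) (simp_all add: complex_linear_map_def)
qed

definition cinner :: "complex^'n \<Rightarrow> complex^'n \<Rightarrow> complex" where
  "cinner x y = (\<Sum>i\<in>UNIV. cnj (x$i) * y$i)"

lemma cinner_mat_adjoint: "cinner x (A *v y) = cinner (mat_adjoint A *v x) y"
  unfolding cinner_def mat_adjoint_def matrix_vector_mult_def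
  by (simp add: sum_distrib_left sum_distrib_right mult_ac) (rule sum.swap)

lemma cinner_scale_left: "cinner (c *s x) y = cnj c * cinner x y"
  by (simp add: cinner_def sum_distrib_left mult_ac)

lemma cinner_scale_right: "cinner x (c *s y) = c * cinner x y"
  by (simp add: cinner_def sum_distrib_left mult_ac)

lemma cinner_self_eq_0: "cinner x x = 0 \<Longrightarrow> x = 0"
proof -
  assume "cinner x x = 0"
  moreover have "cinner x x = of_real (\<Sum>i\<in>UNIV. (cmod (x$i))\<^sup>2)"
    unfolding cinner_def of_real_sum complex_norm_square by (simp add: mult.commute)
  ultimately have "(\<Sum>i\<in>UNIV. (cmod (x$i))\<^sup>2) = 0"
    by (metis of_real_eq_0_iff)
  then have "\<forall>i. (cmod (x$i))\<^sup>2 = 0"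
    by (simp add: sum_nonneg_eq_0_iff)
  then show "x = 0"
    by (simp add: vec_eq_iff)
qed

lemma hermitian_eigenvalue_real:
  assumes "hermitian_mat H" "\<mu> \<in> mat_eigenvalues H"
  shows "cnj \<mu> = \<mu>"
proof -
  obtain u where u: "u \<noteq> 0" "H *v u = \<mu> *s u"
    using assms(2) by (auto simp: mat_eigenvalues_def)
  have "\<mu> * cinner u u = cinner u (H *v u)"
    by (simp add: u cinner_scale_right)
  also have "\<dots> = cinner (H *v u) u"
    using assms(1) by (simp add: cinner_mat_adjoint hermitian_mat_iff_adjoint)
  also have "\<dots> = cnj \<mu> * cinner u u"
    by (simp add: u cinner_scale_left)
  finally show ?thesis
    using u(1) cinner_self_eq_0 by fastforce
qed

lemma hermitian_kernel_square:
  assumes "hermitian_mat A" "A *v (A *v v) = 0"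
  shows "A *v v = 0"
proof -
  have "cinner (A *v v) (A *v v) = cinner v (A *v (A *v v))"
    using assms(1) by (simp add: cinner_mat_adjoint hermitian_mat_iff_adjoint)
  also have "\<dots> = 0"
    by (simp add: assms(2) cinner_def)
  finally show ?thesis
    by (rule cinner_self_eq_0)
qed

section \<open>Polynomials evaluated at a matrix\<close>

definition poly_mat :: "complex poly \<Rightarrow> complex^'n^'n \<Rightarrow> complex^'n^'n" where
  "poly_mat p A = fold_coeffs (\<lambda>a M. mat a + A ** M) p 0"

lemma poly_mat_0 [simp]: "poly_mat 0 A = 0"
  by (simp add: poly_mat_def)

lemma poly_mat_pCons [simp]: "poly_mat (pCons a p) A = mat a + A ** poly_mat p A"
  by (cases "p = 0 \<and> a = 0") (auto simp: poly_mat_def)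

lemma poly_mat_1 [simp]: "poly_mat 1 A = mat 1"
  by (simp add: one_pCons)

lemma poly_mat_linear_factor: "poly_mat [:-a, 1:] A = A - mat a"
  by (simp add: mat_uminus)

lemma poly_mat_add: "poly_mat (p + q) A = poly_mat p A + poly_mat q A"
proof (induction p q rule: poly_induct2)
  case (pCons a p b q)
  then show ?case
    by (simp add: matrix_add_ldistrib mat_add)
qed simp

lemma poly_mat_smult: "poly_mat (smult c p) A = cmat_scale c (poly_mat p A)"
  by (induction p) (simp_all add: cmat_scale_add_right cmat_scale_mat)

lemma poly_mat_mult: "poly_mat (p * q) A = poly_mat p A ** poly_mat q A"
  by (induction p)
    (simp_all add: poly_mat_add poly_mat_smult matrix_add_rdistrib mat_mult_left_eq_cmat_scale
      matrix_mul_assoc)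

lemma poly_mat_mult_commute: "poly_mat p A ** poly_mat q A = poly_mat q A ** poly_mat p A"
  by (metis poly_mat_mult mult.commute)

lemma poly_mat_commute: "A ** poly_mat p A = poly_mat p A ** A"
  using poly_mat_mult_commute[of "[:0, 1:]" A p] by simp

lemma poly_mat_sum: "poly_mat (sum f S) A = (\<Sum>x\<in>S. poly_mat (f x) A)"
  by (induction S rule: infinite_finite_induct) (simp_all add: poly_mat_add)

lemma poly_mat_eigen:
  assumes "A ** M = cmat_scale l M"
  shows "poly_mat p A ** M = cmat_scale (poly p l) M"
proof (induction p)
  case (pCons a p)
  have "poly_mat (pCons a p) A ** M = cmat_scale a M + A ** (poly_mat p A ** M)"
    by (simp add: matrix_add_rdistrib mat_mult_left_eq_cmat_scale matrix_mul_assoc)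
  also have "\<dots> = cmat_scale (poly (pCons a p) l) M"
    by (simp add: pCons.IH assms cmat_scale_add_left mult.commute)
  finally show ?case .
qed simp

lemma poly_mat_eigenvector:
  assumes "A *v v = l *s v"
  shows "poly_mat p A *v v = poly p l *s v"
proof (induction p)
  case (pCons a p)
  have "poly_mat (pCons a p) A *v v = a *s v + A *v (poly_mat p A *v v)"
    by (simp add: matrix_vector_mult_add_rdistrib mat_matrix_vector_mult matrix_vector_mul_assoc)
  also have "\<dots> = poly (pCons a p) l *s v"
    by (simp add: pCons.IH assms vector_scalar_commute vec_eq_iff algebra_simps)
  finally show ?case .
qed simp

lemma exists_vanishing_combination:
  fixes f :: "nat \<Rightarrow> 'a::euclidean_space"
  obtains u where "\<exists>i\<le>DIM('a). u i \<noteq> 0" "(\<Sum>i\<le>DIM('a). u i *\<^sub>R f i) = 0"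
proof (cases "inj_on f {..DIM('a)}")
  case True
  let ?S = "f ` {..DIM('a)}"
  have "card ?S = Suc DIM('a)"
    using True by (simp add: card_image)
  then have "dependent ?S"
    using independent_bound[of ?S] by auto
  then obtain c v where "v \<in> ?S" "c v \<noteq> 0" "(\<Sum>x\<in>?S. c x *\<^sub>R x) = 0"
    using real_vector.dependent_finite[of ?S] by auto
  moreover have "(\<Sum>x\<in>?S. c x *\<^sub>R x) = (\<Sum>i\<le>DIM('a). c (f i) *\<^sub>R f i)"
    using True by (simp add: sum.reindex)
  ultimately show ?thesis
    using that[of "c \<circ> f"] by auto
next
  case False
  then obtain a b where ab: "a \<le> DIM('a)" "b \<le> DIM('a)" "a \<noteq> b" "f a = f b"
    by (auto simp: inj_on_def)
  let ?u = "\<lambda>i. (if i = a then 1 else 0) - (if i = b then 1 else (0::real))"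
  have sum: "(\<Sum>i\<le>DIM('a). ?u i *\<^sub>R f i) = f a - f b"
    using ab by (simp add: scaleR_left_diff_distrib sum_subtractf if_distrib[of "\<lambda>r. r *\<^sub>R _"]
        cong: if_cong)
  show ?thesis
  proof (rule that)
    show "\<exists>i\<le>DIM('a). ?u i \<noteq> 0"
      using ab by (intro exI[of _ a]) simp
  qed (use ab sum in simp)
qed

lemma exists_annihilating_poly:
  fixes A :: "complex^'n^'n"
  obtains p where "p \<noteq> 0" "poly_mat p A = 0"
proof -
  let ?N = "DIM(complex^'n^'n)"
  obtain u where u: "\<exists>i\<le>?N. u i \<noteq> 0" "(\<Sum>i\<le>?N. u i *\<^sub>R poly_mat (monom 1 i) A) = 0"
    by (rule exists_vanishing_combination)
  define p :: "complex poly" where "p = (\<Sum>i\<le>?N. smult (of_real (u i)) (monom 1 i))"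
  from u(1) obtain i where "i \<le> ?N" "u i \<noteq> 0"
    by blast
  then have "coeff p i \<noteq> 0"
    by (simp add: p_def coeff_sum coeff_monom if_distrib[of "\<lambda>x. _ * x"] cong: if_cong)
  then have "p \<noteq> 0"
    by auto
  moreover have "poly_mat p A = 0"
    using u(2)
    by (simp add: p_def poly_mat_sum poly_mat_smult scaleR_eq_cmat_scale)
  ultimately show ?thesis
    by (rule that)
qed

lemma finite_mat_eigenvalues: "finite (mat_eigenvalues (A :: complex^'n^'n))"
proof -
  obtain p where p: "p \<noteq> 0" "poly_mat p A = 0"
    by (rule exists_annihilating_poly)
  have "mat_eigenvalues A \<subseteq> {x. poly p x = 0}"
  proof
    fix \<mu> assume "\<mu> \<in> mat_eigenvalues A"
    then obtain v where v: "v \<noteq> 0" "A *v v = \<mu> *s v"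
      by (auto simp: mat_eigenvalues_def)
    then have "poly p \<mu> *s v = 0"
      using poly_mat_eigenvector[of A v \<mu> p] p(2) by simp
    with v(1) show "\<mu> \<in> {x. poly p x = 0}"
      by (auto simp: vec_eq_iff)
  qed
  then show ?thesis
    using poly_roots_finite[OF p(1)] by (rule finite_subset)
qed

section \<open>Spectral projectors of a Hermitian matrix\<close>

lemma hermitian_eigenvalue_product_kernel:
  fixes H :: "complex^'n^'n"
  defines "V \<equiv> poly_mat (\<Prod>m\<in>mat_eigenvalues H. [:-m, 1:]) H"
  assumes H: "hermitian_mat H" and w: "(H - mat \<mu>) *v (V *v v) = 0"
  shows "V *v v = 0"
proof (rule ccontr)
  assume nz: "V *v v \<noteq> 0"
  have "H *v (V *v v) = \<mu> *s (V *v v)"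
    using w by (simp add: matrix_vector_mult_diff_rdistrib mat_matrix_vector_mult)
  with nz have \<mu>: "\<mu> \<in> mat_eigenvalues H"
    by (auto simp: mat_eigenvalues_def)
  define u where "u = poly_mat (\<Prod>m\<in>mat_eigenvalues H - {\<mu>}. [:-m, 1:]) H *v v"
  have "(\<Prod>m\<in>mat_eigenvalues H. [:-m, 1:])
      = [:-\<mu>, 1:] * (\<Prod>m\<in>mat_eigenvalues H - {\<mu>}. [:-m, 1:])"
    by (rule prod.remove[OF finite_mat_eigenvalues \<mu>])
  then have V: "V *v v = (H - mat \<mu>) *v u"
    by (simp only: V_def u_def poly_mat_mult poly_mat_linear_factor matrix_vector_mul_assoc)
  have "hermitian_mat (H - mat \<mu>)"
    using H hermitian_eigenvalue_real[OF H \<mu>]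
    by (simp add: hermitian_mat_iff_adjoint mat_adjoint_diff)
  then have "(H - mat \<mu>) *v u = 0"
    by (rule hermitian_kernel_square) (use w V in simp)
  with nz V show False
    by simp
qed

lemma hermitian_eigenvalue_product_annihilates:
  fixes H :: "complex^'n^'n"
  assumes H: "hermitian_mat H"
  shows "poly_mat (\<Prod>m\<in>mat_eigenvalues H. [:-m, 1:]) H = 0"
proof -
  let ?V = "poly_mat (\<Prod>m\<in>mat_eigenvalues H. [:-m, 1:]) H"
  obtain p where p: "p \<noteq> 0" "poly_mat p H = 0"
    by (rule exists_annihilating_poly)
  obtain r where r: "smult (lead_coeff p) (\<Prod>i<degree p. [:-r i, 1:]) = p"
    using complex_poly_decompose' by blast
  have "poly_mat (\<Prod>i<degree p. [:-r i, 1:]) H = 0"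
    using p r poly_mat_smult by (metis cmat_scale_eq_0_iff leading_coeff_0_iff)
  moreover have "?V *v v = 0" if "poly_mat (\<Prod>i<n. [:-r i, 1:]) H *v v = 0" for n v
    using that
  proof (induction n arbitrary: v)
    case (Suc n)
    have "poly_mat (\<Prod>i<Suc n. [:-r i, 1:]) H
        = poly_mat (\<Prod>i<n. [:-r i, 1:]) H ** (H - mat (r n))"
      by (simp only: prod.lessThan_Suc poly_mat_mult poly_mat_linear_factor)
    with Suc.prems have "poly_mat (\<Prod>i<n. [:-r i, 1:]) H *v ((H - mat (r n)) *v v) = 0"
      by (simp add: matrix_vector_mul_assoc)
    then have "?V *v ((H - mat (r n)) *v v) = 0"
      by (rule Suc.IH)
    then have "(H - mat (r n)) *v (?V *v v) = 0"
      by (metis poly_mat_linear_factor poly_mat_mult_commute matrix_vector_mul_assoc)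
    with H show ?case
      by (rule hermitian_eigenvalue_product_kernel)
  qed simp
  ultimately show ?thesis
    unfolding matrix_eq by (metis matrix_vector_mult_0)
qed

lemma hermitian_eigenvalues_nonempty:
  fixes H :: "complex^'n^'n"
  assumes "hermitian_mat H"
  shows "mat_eigenvalues H \<noteq> {}"
proof
  assume "mat_eigenvalues H = {}"
  then have "mat 1 = (0 :: complex^'n^'n)"
    using hermitian_eigenvalue_product_annihilates[OF assms] by simp
  then have "(mat 1 :: complex^'n^'n) $ i $ i = 0" for i
    by simp
  then show False
    by (simp add: mat_def)
qed

definition lagrange_basis :: "'a::field set \<Rightarrow> 'a \<Rightarrow> 'a poly" where
  "lagrange_basis S l = smult (inverse (\<Prod>m\<in>S - {l}. l - m)) (\<Prod>m\<in>S - {l}. [:-m, 1:])"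

lemma poly_lagrange_basis:
  assumes "finite S" "l \<in> S" "n \<in> S"
  shows "poly (lagrange_basis S l) n = (if n = l then 1 else 0)"
proof (cases "n = l")
  case True
  have "(\<Prod>m\<in>S - {l}. l - m) \<noteq> 0"
    using assms(1) by simp
  then show ?thesis
    using True by (simp add: lagrange_basis_def poly_prod)
next
  case False
  then have "(\<Prod>m\<in>S - {l}. n - m) = 0"
    using assms by (simp add: prod_zero_iff)
  then show ?thesis
    using False by (simp add: lagrange_basis_def poly_prod)
qed

lemma degree_lagrange_basis:
  assumes "finite S" "l \<in> S"
  shows "degree (lagrange_basis S l) < card S"
proof -
  have "degree (lagrange_basis S l) \<le> degree (\<Prod>m\<in>S - {l}. [:-m, 1:])"
    by (simp add: lagrange_basis_def degree_smult_le)
  also have "\<dots> \<le> card (S - {l})"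
    using degree_prod_sum_le[of "S - {l}" "\<lambda>m. [:-m, 1:]"] assms(1) by (simp add: o_def)
  also have "\<dots> < card S"
    using assms by (rule card_Diff1_less)
  finally show ?thesis .
qed

lemma sum_lagrange_basis:
  assumes "finite S" "S \<noteq> {}"
  shows "(\<Sum>l\<in>S. lagrange_basis S l) = 1"
proof (rule poly_eqI_degree[of S])
  fix n assume n: "n \<in> S"
  have "poly (\<Sum>l\<in>S. lagrange_basis S l) n = (\<Sum>l\<in>S. if n = l then 1 else 0)"
    unfolding poly_sum using assms(1) n by (intro sum.cong) (simp_all add: poly_lagrange_basis)
  then show "poly (\<Sum>l\<in>S. lagrange_basis S l) n = poly 1 n"
    using assms(1) n by simp
next
  show "degree (\<Sum>l\<in>S. lagrange_basis S l) < card S"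
    using assms by (intro degree_sum_less) (auto simp: degree_lagrange_basis card_gt_0_iff)
  show "degree (1 :: 'a poly) < card S"
    using assms by (simp add: card_gt_0_iff)
qed

lemma linear_factor_mult_lagrange_basis:
  assumes "finite S" "l \<in> S"
  shows "[:-l, 1:] * lagrange_basis S l
    = smult (inverse (\<Prod>m\<in>S - {l}. l - m)) (\<Prod>m\<in>S. [:-m, 1:])"
  unfolding lagrange_basis_def prod.remove[OF assms, of "\<lambda>m. [:-m, 1:]"] by (rule mult_smult_right)

definition spectral_projector :: "complex^'n^'n \<Rightarrow> complex \<Rightarrow> complex^'n^'n" where
  "spectral_projector A l = poly_mat (lagrange_basis (mat_eigenvalues A) l) A"

lemma sum_spectral_projector:
  assumes "mat_eigenvalues A \<noteq> {}"
  shows "(\<Sum>l\<in>mat_eigenvalues A. spectral_projector A l) = mat 1"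
  unfolding spectral_projector_def poly_mat_sum[symmetric]
  by (simp add: sum_lagrange_basis[OF finite_mat_eigenvalues assms])

lemma spectral_projector_eigen:
  assumes H: "hermitian_mat H" and l: "l \<in> mat_eigenvalues H"
  shows "H ** spectral_projector H l = cmat_scale l (spectral_projector H l)"
proof -
  have "(H - mat l) ** spectral_projector H l
      = poly_mat ([:-l, 1:] * lagrange_basis (mat_eigenvalues H) l) H"
    by (simp only: spectral_projector_def poly_mat_mult poly_mat_linear_factor)
  also have "\<dots> = 0"
    using hermitian_eigenvalue_product_annihilates[OF H]
    by (simp only: linear_factor_mult_lagrange_basis[OF finite_mat_eigenvalues l] poly_mat_smult
        cmat_scale_zero)
  finally show ?thesis
    by (simp add: matrix_diff_rdistrib mat_mult_left_eq_cmat_scale)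
qed

lemma spectral_projector_eigen_right:
  assumes "hermitian_mat H" "l \<in> mat_eigenvalues H"
  shows "spectral_projector H l ** H = cmat_scale l (spectral_projector H l)"
  using spectral_projector_eigen[OF assms] by (simp add: spectral_projector_def poly_mat_commute)

lemma spectral_projector_mult:
  assumes H: "hermitian_mat H" and l: "l \<in> mat_eigenvalues H" and n: "n \<in> mat_eigenvalues H"
  shows "spectral_projector H l ** spectral_projector H n
    = (if l = n then spectral_projector H n else 0)"
proof -
  have "spectral_projector H l ** spectral_projector H n
      = cmat_scale (poly (lagrange_basis (mat_eigenvalues H) l) n) (spectral_projector H n)"
    unfolding spectral_projector_def[of H l]
    by (rule poly_mat_eigen[OF spectral_projector_eigen[OF H n]])
  then show ?thesis
    by (auto simp: poly_lagrange_basis[OF finite_mat_eigenvalues l n])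
qed

lemma matrix_mult_eigen_distinct:
  assumes "M ** A = cmat_scale a M" "A ** N = cmat_scale b N" "a \<noteq> b"
  shows "M ** N = 0"
proof -
  have "cmat_scale a (M ** N) = cmat_scale b (M ** N)"
    by (metis assms(1,2) cmat_scale_mult_left cmat_scale_mult_right matrix_mul_assoc)
  then have "cmat_scale (a - b) (M ** N) = 0"
    by (simp add: cmat_scale_diff_left)
  with assms(3) show ?thesis
    by (simp add: cmat_scale_eq_0_iff)
qed

lemma spectral_projector_hermitian:
  assumes H: "hermitian_mat H" and l: "l \<in> mat_eigenvalues H"
  shows "mat_adjoint (spectral_projector H l) = spectral_projector H l"
proof -
  let ?S = "mat_eigenvalues H" and ?P = "spectral_projector H"
  have orth: "mat_adjoint (?P n) ** ?P l = 0" if n: "n \<in> ?S" "n \<noteq> l" for n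
  proof (rule matrix_mult_eigen_distinct)
    have "mat_adjoint (?P n) ** H = mat_adjoint (H ** ?P n)"
      using H by (simp add: mat_adjoint_mult hermitian_mat_iff_adjoint)
    also have "\<dots> = cmat_scale n (mat_adjoint (?P n))"
      by (simp add: spectral_projector_eigen[OF H n(1)] mat_adjoint_cmat_scale
          hermitian_eigenvalue_real[OF H n(1)])
    finally show "mat_adjoint (?P n) ** H = cmat_scale n (mat_adjoint (?P n))" .
    show "H ** ?P l = cmat_scale l (?P l)"
      using H l by (rule spectral_projector_eigen)
  qed (use n in simp)
  have "?P l = mat_adjoint (\<Sum>n\<in>?S. ?P n) ** ?P l"
    using sum_spectral_projector[OF hermitian_eigenvalues_nonempty[OF H]] by simp
  also have "\<dots> = (\<Sum>n\<in>?S. mat_adjoint (?P n) ** ?P l)"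
    by (simp add: mat_adjoint_sum matrix_sum_rdistrib)
  also have "\<dots> = mat_adjoint (?P l) ** ?P l"
    by (rule sum.remove[OF finite_mat_eigenvalues l, THEN trans]) (simp add: orth)
  finally have "?P l = mat_adjoint (?P l) ** ?P l" .
  then show ?thesis
    by (metis mat_adjoint_adjoint mat_adjoint_mult)
qed

section \<open>The evolution generated by i ad_H\<close>

lemma complex_linear_map_i_ad: "complex_linear_map (i_ad H)"
  unfolding complex_linear_map_def i_ad_def commutator_def
  by (simp add: matrix_add_ldistrib matrix_add_rdistrib cmat_scale_diff_right cmat_scale_add_right
      mult.commute)

lemma i_ad_sandwich_eigen:
  assumes "H ** A = cmat_scale a A" "B ** H = cmat_scale b B"
  shows "i_ad H (A ** X ** B) = cmat_scale (\<i> * (a - b)) (A ** X ** B)"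
proof -
  have "H ** (A ** X ** B) = cmat_scale a (A ** X ** B)"
    by (simp add: matrix_mul_assoc assms(1))
  moreover have "(A ** X ** B) ** H = cmat_scale b (A ** X ** B)"
    by (simp add: assms(2) flip: matrix_mul_assoc)
  ultimately show ?thesis
    by (simp add: i_ad_def commutator_def flip: cmat_scale_diff_left)
qed

lemma sums_cmat_scale_exp:
  "(\<lambda>n. (t ^ n / fact n) *\<^sub>R cmat_scale (z ^ n) M) sums cmat_scale (exp (of_real t * z)) M"
proof -
  have "linear (\<lambda>c. cmat_scale c M)"
    by (rule linearI) (simp_all add: cmat_scale_add_left scaleR_eq_cmat_scale scaleR_conv_of_real)
  then have "bounded_linear (\<lambda>c. cmat_scale c M)"
    by (simp add: linear_conv_bounded_linear)
  then have "(\<lambda>n. cmat_scale ((of_real t * z) ^ n /\<^sub>R fact n) M) sums cmat_scale (exp (of_real t * z)) M"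
    by (rule bounded_linear.sums[OF _ exp_converges])
  moreover have "cmat_scale ((of_real t * z) ^ n /\<^sub>R fact n) M = (t ^ n / fact n) *\<^sub>R cmat_scale (z ^ n) M"
    for n
    by (simp add: scaleR_eq_cmat_scale scaleR_conv_of_real power_mult_distrib divide_inverse mult_ac)
  ultimately show ?thesis
    by simp
qed

lemma super_exp_eigen_sum:
  assumes L: "complex_linear_map L" and eig: "\<And>i. i \<in> I \<Longrightarrow> L (M i) = cmat_scale (c i) (M i)"
  shows "super_exp t L (\<Sum>i\<in>I. M i) = (\<Sum>i\<in>I. cmat_scale (exp (of_real t * c i)) (M i))"
proof -
  have pow: "(L ^^ n) (\<Sum>i\<in>I. M i) = (\<Sum>i\<in>I. cmat_scale (c i ^ n) (M i))" for n
  proof (induction n)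
    case (Suc n)
    have "L (cmat_scale (c i ^ n) (M i)) = cmat_scale (c i ^ Suc n) (M i)" if "i \<in> I" for i
      using L eig[OF that] by (simp add: complex_linear_map_def mult.commute)
    then show ?case
      using Suc by (simp add: complex_linear_map_sum[OF L])
  qed simp
  have "(\<lambda>n. (t ^ n / fact n) *\<^sub>R (L ^^ n) (\<Sum>i\<in>I. M i))
      sums (\<Sum>i\<in>I. cmat_scale (exp (of_real t * c i)) (M i))"
    unfolding pow scaleR_sum_right by (intro sums_sum sums_cmat_scale_exp)
  then show ?thesis
    unfolding super_exp_def by (rule sums_unique[symmetric])
qed

lemma sum_spectral_sandwich:
  assumes "mat_eigenvalues A \<noteq> {}"
  shows "(\<Sum>l\<in>mat_eigenvalues A. \<Sum>n\<in>mat_eigenvalues A.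
      spectral_projector A l ** \<rho> ** spectral_projector A n) = \<rho>"
  by (simp add: sum_spectral_projector[OF assms] flip: matrix_sum_ldistrib matrix_sum_rdistrib)

lemma super_exp_i_ad_hermitian:
  assumes H: "hermitian_mat H"
  shows "super_exp t (i_ad H) \<rho> = (\<Sum>l\<in>mat_eigenvalues H. \<Sum>n\<in>mat_eigenvalues H.
    cmat_scale (exp (of_real t * (\<i> * (l - n))))
      (spectral_projector H l ** \<rho> ** spectral_projector H n))"
proof -
  let ?S = "mat_eigenvalues H" and ?P = "spectral_projector H"
  let ?M = "\<lambda>p. ?P (fst p) ** \<rho> ** ?P (snd p)" and ?c = "\<lambda>p. \<i> * (fst p - snd p)"
  have "super_exp t (i_ad H) \<rho> = super_exp t (i_ad H) (\<Sum>p\<in>?S \<times> ?S. ?M p)"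
    by (simp add: sum_spectral_sandwich[OF hermitian_eigenvalues_nonempty[OF H]]
        sum.cartesian_product')
  also have "\<dots> = (\<Sum>p\<in>?S \<times> ?S. cmat_scale (exp (of_real t * ?c p)) (?M p))"
    by (rule super_exp_eigen_sum[OF complex_linear_map_i_ad])
      (auto intro!: i_ad_sandwich_eigen spectral_projector_eigen[OF H]
        spectral_projector_eigen_right[OF H])
  finally show ?thesis
    by (simp add: sum.cartesian_product')
qed

lemma trace_super_exp_i_ad:
  assumes H: "hermitian_mat H"
  shows "trace (super_exp t (i_ad H) \<rho>) = trace \<rho>"
proof -
  let ?S = "mat_eigenvalues H" and ?P = "spectral_projector H"
  have diag: "trace (?P l ** \<rho> ** ?P n) = (if l = n then trace (?P l ** \<rho>) else 0)"
    if "l \<in> ?S" "n \<in> ?S" for l n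
  proof -
    have "trace (?P l ** \<rho> ** ?P n) = trace ((?P n ** ?P l) ** \<rho>)"
      by (metis matrix_mul_assoc trace_mul_sym)
    then show ?thesis
      using spectral_projector_mult[OF H that(2,1)] by (auto simp: trace_def)
  qed
  have "trace (super_exp t (i_ad H) \<rho>) = (\<Sum>l\<in>?S. trace (?P l ** \<rho>))"
    by (simp add: super_exp_i_ad_hermitian[OF H] trace_sum trace_cmat_scale diag if_distrib
        finite_mat_eigenvalues cong: if_cong)
  also have "\<dots> = trace \<rho>"
    by (simp add: sum_spectral_projector[OF hermitian_eigenvalues_nonempty[OF H]]
        flip: trace_sum matrix_sum_rdistrib)
  finally show ?thesis .
qed

section \<open>The programming protocol\<close>

definition block :: "complex^('d \<times> 'k::finite)^('d \<times> 'k) \<Rightarrow> 'k \<Rightarrow> 'k \<Rightarrow> complex^'d^'d" where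
  "block X j k = (\<chi> a b. X $ (a, j) $ (b, k))"

lemma block_add: "block (A + B) j k = block A j k + block B j k"
  by (simp add: block_def vec_eq_iff)

lemma block_cmat_scale: "block (cmat_scale c A) j k = cmat_scale c (block A j k)"
  by (simp add: block_def cmat_scale_def vec_eq_iff)

lemma block_tensor_mat: "block (tensor_mat \<rho> \<sigma>) j k = cmat_scale (\<sigma> $ j $ k) \<rho>"
  by (simp add: block_def cmat_scale_def tensor_mat_def vec_eq_iff mult.commute)

lemma mat_adjoint_block:
  assumes "hermitian_mat X"
  shows "mat_adjoint (block X j k) = block X k j"
proof -
  have "cnj (X $ q $ p) = X $ p $ q" for p q
    using assms unfolding hermitian_mat_def by (metis complex_cnj_cnj)
  then show ?thesis
    by (simp add: block_def mat_adjoint_def vec_eq_iff)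
qed

lemma trace_tensor_mat: "trace (tensor_mat A B) = trace A * trace B"
  by (simp add: trace_def tensor_mat_def sum_product sum.cartesian_product' flip: UNIV_Times_UNIV)

definition block_sandwich ::
  "('k::finite \<Rightarrow> complex^'d^'d) \<Rightarrow> complex^('d \<times> 'k)^('d \<times> 'k) \<Rightarrow> complex^'d^'d" where
  "block_sandwich F X = (\<Sum>j\<in>UNIV. \<Sum>k\<in>UNIV. F j ** block X j k ** F k)"

lemma complex_linear_map_block_sandwich: "complex_linear_map (block_sandwich F)"
  unfolding complex_linear_map_def block_sandwich_def
  by (simp add: block_add block_cmat_scale matrix_add_ldistrib matrix_add_rdistrib sum.distrib
      cmat_scale_sum_right)

lemma hermitian_block_sandwich:
  assumes "\<And>j. hermitian_mat (F j)" "hermitian_mat X"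
  shows "hermitian_mat (block_sandwich F X)"
proof -
  have "mat_adjoint (F j) = F j" for j
    using assms(1) by (simp add: hermitian_mat_iff_adjoint)
  then show ?thesis
    unfolding hermitian_mat_iff_adjoint block_sandwich_def
    by (simp add: mat_adjoint_sum mat_adjoint_mult mat_adjoint_block[OF assms(2)] matrix_mul_assoc)
      (rule sum.swap)
qed

lemma block_sandwich_tensor_mat:
  "block_sandwich F (tensor_mat \<rho> \<sigma>)
    = (\<Sum>j\<in>UNIV. \<Sum>k\<in>UNIV. cmat_scale (\<sigma> $ j $ k) (F j ** \<rho> ** F k))"
  by (simp add: block_sandwich_def block_tensor_mat)

definition trace_corrected ::
  "(complex^'n^'n \<Rightarrow> complex^'m^'m) \<Rightarrow> complex^'n^'n \<Rightarrow> complex^'m^'m" where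
  "trace_corrected Q X = Q X + cmat_scale ((trace X - trace (Q X)) / of_nat CARD('m)) (mat 1)"

lemma trace_corrected_eq: "trace (Q X) = trace X \<Longrightarrow> trace_corrected Q X = Q X"
  by (simp add: trace_corrected_def)

lemma HPTP_trace_corrected:
  fixes Q :: "complex^'n^'n \<Rightarrow> complex^'m^'m"
  assumes lin: "complex_linear_map Q" and herm: "\<And>A. hermitian_mat A \<Longrightarrow> hermitian_mat (Q A)"
  shows "HPTP (trace_corrected Q)"
  unfolding HPTP_def
proof (intro conjI allI impI)
  let ?c = "\<lambda>X. (trace X - trace (Q X)) / of_nat CARD('m)"
  show "complex_linear_map (trace_corrected Q)"
    unfolding complex_linear_map_def
  proof (intro conjI allI)
    fix A B
    have "?c (A + B) = ?c A + ?c B"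
      using lin by (simp add: complex_linear_map_def trace_add add_divide_distrib diff_divide_distrib)
    then show "trace_corrected Q (A + B) = trace_corrected Q A + trace_corrected Q B"
      using lin by (simp add: complex_linear_map_def trace_corrected_def cmat_scale_add_left add_ac)
  next
    fix c A
    have "?c (cmat_scale c A) = c * ?c A"
      using lin by (simp add: complex_linear_map_def trace_cmat_scale algebra_simps)
    then show "trace_corrected Q (cmat_scale c A) = cmat_scale c (trace_corrected Q A)"
      using lin by (simp add: complex_linear_map_def trace_corrected_def cmat_scale_add_right)
  qed
  fix A
  show "trace (trace_corrected Q A) = trace A"
    by (simp add: trace_corrected_def trace_add trace_cmat_scale trace_I)
  assume A: "hermitian_mat A"
  then have "cnj (trace A) = trace A" "cnj (trace (Q A)) = trace (Q A)"
    using herm by (metis hermitian_mat_iff_adjoint trace_mat_adjoint)+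
  then show "hermitian_mat (trace_corrected Q A)"
    using herm[OF A] by (simp add: hermitian_mat_iff_adjoint trace_corrected_def mat_adjoint_add
        mat_adjoint_cmat_scale)
qed

definition rank_one :: "('k::finite \<Rightarrow> complex) \<Rightarrow> complex^'k^'k" where
  "rank_one \<psi> = (\<chi> j k. \<psi> j * cnj (\<psi> k))"

lemma psd_mat_rank_one: "psd_mat (rank_one (\<psi> :: 'k::finite \<Rightarrow> complex))"
  unfolding psd_mat_def Let_def
proof
  fix v :: "complex^'k"
  define s where "s = (\<Sum>k\<in>UNIV. cnj (\<psi> k) * v $ k)"
  have "(\<Sum>j\<in>UNIV. \<Sum>k\<in>UNIV. cnj (v $ j) * rank_one \<psi> $ j $ k * v $ k)
      = (\<Sum>j\<in>UNIV. cnj (v $ j) * \<psi> j) * s"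
    by (simp add: s_def rank_one_def sum_product mult.assoc)
  also have "(\<Sum>j\<in>UNIV. cnj (v $ j) * \<psi> j) = cnj s"
    by (simp add: s_def mult.commute)
  also have "cnj s * s = of_real ((cmod s)\<^sup>2)"
    by (metis complex_norm_square mult.commute)
  finally show "Im (\<Sum>j\<in>UNIV. \<Sum>k\<in>UNIV. cnj (v $ j) * rank_one \<psi> $ j $ k * v $ k) = 0 \<and>
      0 \<le> Re (\<Sum>j\<in>UNIV. \<Sum>k\<in>UNIV. cnj (v $ j) * rank_one \<psi> $ j $ k * v $ k)"
    by simp
qed

lemma trace_rank_one: "trace (rank_one \<psi>) = (\<Sum>j\<in>UNIV. of_real ((cmod (\<psi> j))\<^sup>2))"
  unfolding trace_def rank_one_def complex_norm_square by simp

lemma of_real_sqrt_mult_self: "of_real (sqrt (real n)) * of_real (sqrt (real n)) = of_nat n"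
  by (simp flip: of_real_mult)

definition program_state :: "('k::finite \<Rightarrow> complex) \<Rightarrow> real \<Rightarrow> complex^'k^'k" where
  "program_state lam t = rank_one (\<lambda>j. exp (\<i> * of_real t * lam j) / of_real (sqrt CARD('k)))"

lemma density_mat_program_state:
  fixes lam :: "'k::finite \<Rightarrow> complex"
  assumes real: "\<And>j. cnj (lam j) = lam j"
  shows "density_mat (program_state lam t)"
proof -
  have "Im (lam j) = 0" for j
    using arg_cong[OF real[of j], of Im] by simp
  then have norm_sq: "(cmod (exp (\<i> * of_real t * lam j) / of_real (sqrt CARD('k))))\<^sup>2
      = 1 / CARD('k)" for j
    by (simp add: norm_divide power_divide norm_exp_eq_Re)
  have "trace (program_state lam t) = (\<Sum>j::'k\<in>UNIV. of_real (1 / CARD('k)))"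
    unfolding program_state_def trace_rank_one norm_sq by (rule refl)
  also have "\<dots> = 1"
    by simp
  finally show ?thesis
    by (simp add: density_mat_def program_state_def psd_mat_rank_one)
qed

lemma program_state_entry:
  fixes lam :: "'k::finite \<Rightarrow> complex"
  assumes real: "\<And>j. cnj (lam j) = lam j"
  shows "of_nat CARD('k) * program_state lam t $ j $ k = exp (of_real t * (\<i> * (lam j - lam k)))"
proof -
  have "cnj (exp (\<i> * of_real t * lam k)) = exp (- (\<i> * of_real t * lam k))"
    using real[of k] by (simp add: exp_cnj)
  moreover note of_real_sqrt_mult_self[of "CARD('k)", where 'a = complex]
  ultimately have "of_nat CARD('k) * program_state lam t $ j $ k
      = exp (\<i> * of_real t * lam j) * exp (- (\<i> * of_real t * lam k))"
    by (simp add: program_state_def rank_one_def field_simps)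
  also have "\<dots> = exp (\<i> * of_real t * lam j + - (\<i> * of_real t * lam k))"
    by (rule exp_add[symmetric])
  also have "\<i> * of_real t * lam j + - (\<i> * of_real t * lam k) = of_real t * (\<i> * (lam j - lam k))"
    by (simp add: algebra_simps)
  finally show ?thesis .
qed

(* The factor sqrt K cancels the normalisation 1/K of the program state. *)
definition retrieval_map :: "complex^'d^'d \<Rightarrow> ('k::finite \<Rightarrow> complex)
    \<Rightarrow> complex^('d \<times> 'k)^('d \<times> 'k) \<Rightarrow> complex^'d^'d" where
  "retrieval_map H lam = trace_corrected
    (block_sandwich (\<lambda>j. cmat_scale (of_real (sqrt CARD('k))) (spectral_projector H (lam j))))"

lemma HPTP_retrieval_map:
  fixes H :: "complex^'d^'d" and lam :: "'k::finite \<Rightarrow> complex"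
  assumes H: "hermitian_mat H" and lam: "\<And>j. lam j \<in> mat_eigenvalues H"
  shows "HPTP (retrieval_map H lam)"
  unfolding retrieval_map_def
  by (intro HPTP_trace_corrected complex_linear_map_block_sandwich hermitian_block_sandwich)
    (simp_all add: hermitian_mat_iff_adjoint mat_adjoint_cmat_scale
      spectral_projector_hermitian[OF H lam])

lemma sum_sum_reindex_bij_betw:
  assumes "bij_betw h A B"
  shows "(\<Sum>x\<in>A. \<Sum>y\<in>A. g (h x) (h y)) = (\<Sum>x\<in>B. \<Sum>y\<in>B. g x y)"
proof -
  have "(\<Sum>x\<in>A. \<Sum>y\<in>A. g (h x) (h y)) = (\<Sum>x\<in>A. \<Sum>y\<in>B. g (h x) y)"
    by (intro sum.cong refl sum.reindex_bij_betw[OF assms])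
  also have "\<dots> = (\<Sum>x\<in>B. \<Sum>y\<in>B. g x y)"
    by (rule sum.reindex_bij_betw[OF assms])
  finally show ?thesis .
qed

lemma retrieval_map_program_state:
  fixes H :: "complex^'d^'d" and lam :: "'k::finite \<Rightarrow> complex"
  assumes H: "hermitian_mat H" and lam: "bij_betw lam UNIV (mat_eigenvalues H)"
  shows "retrieval_map H lam (tensor_mat \<rho> (program_state lam t)) = super_exp t (i_ad H) \<rho>"
proof -
  let ?S = "mat_eigenvalues H" and ?P = "spectral_projector H" and ?K = "of_nat CARD('k) :: complex"
  let ?Q = "block_sandwich (\<lambda>j. cmat_scale (of_real (sqrt CARD('k))) (?P (lam j)))"
  have real: "cnj (lam j) = lam j" for j
    using lam hermitian_eigenvalue_real[OF H] by (auto simp: bij_betw_def)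
  have "?Q (tensor_mat \<rho> (program_state lam t)) = (\<Sum>j\<in>UNIV. \<Sum>k\<in>UNIV.
      cmat_scale (?K * program_state lam t $ j $ k) (?P (lam j) ** \<rho> ** ?P (lam k)))"
    by (simp add: block_sandwich_tensor_mat of_real_sqrt_mult_self mult_ac)
  also have "\<dots> = (\<Sum>j\<in>UNIV. \<Sum>k\<in>UNIV.
      cmat_scale (exp (of_real t * (\<i> * (lam j - lam k)))) (?P (lam j) ** \<rho> ** ?P (lam k)))"
    by (simp add: program_state_entry[OF real])
  also have "\<dots> = (\<Sum>l\<in>?S. \<Sum>n\<in>?S.
      cmat_scale (exp (of_real t * (\<i> * (l - n)))) (?P l ** \<rho> ** ?P n))"
    by (rule sum_sum_reindex_bij_betw[OF lam])
  also have "\<dots> = super_exp t (i_ad H) \<rho>"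
    by (rule super_exp_i_ad_hermitian[OF H, symmetric])
  finally have Q: "?Q (tensor_mat \<rho> (program_state lam t)) = super_exp t (i_ad H) \<rho>" .
  moreover have "trace (tensor_mat \<rho> (program_state lam t)) = trace \<rho>"
    using density_mat_program_state[of lam, OF real] by (simp add: trace_tensor_mat density_mat_def)
  ultimately show ?thesis
    unfolding retrieval_map_def by (simp add: trace_corrected_eq trace_super_exp_i_ad[OF H])
qed

theorem proposition3:
  fixes H :: "complex^'d^'d"
  assumes "hermitian_mat H"
    and "CARD('k::finite) = card (mat_eigenvalues H)"
  shows "\<exists>(P :: complex^('d \<times> 'k)^('d \<times> 'k) \<Rightarrow> complex^'d^'d) (\<pi> :: real \<Rightarrow> complex^'k^'k).
           HPTP P \<and> (\<forall>t\<ge>0. density_mat (\<pi> t)) \<and>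
           (\<forall>t\<ge>0. \<forall>\<rho>. P (tensor_mat \<rho> (\<pi> t)) = super_exp t (i_ad H) \<rho>)"
proof -
  obtain lam :: "'k \<Rightarrow> complex" where lam: "bij_betw lam UNIV (mat_eigenvalues H)"
    using finite_same_card_bij[OF finite finite_mat_eigenvalues] assms(2) by auto
  then have "lam j \<in> mat_eigenvalues H" for j
    by (auto simp: bij_betw_def)
  then have "HPTP (retrieval_map H lam)" "density_mat (program_state lam t)" for t
    using assms(1) by (auto intro: HPTP_retrieval_map density_mat_program_state
        hermitian_eigenvalue_real)
  then show ?thesis
    using retrieval_map_program_state[OF assms(1) lam] by blast
qed

end
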